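(* The set $\mathrm{Rec}(Z^* )$ of recognizable subsets of $Z^*$ is uncountable.
   Context: $Z^*$ is the commutative group of finite sequences of integers whose last entry is non-zero (including the empty sequence), with pointwise addition (shorter sequence padded by zeros) and the empty sequence as unit; equivalently the free abelian group on countably many generators, isomorphic to $(\mathbb{Q}_{>0},\times,1)$. A subset $S$ of a monoid $M$ is recognizable if there exist a finite monoid $N$, a monoid morphism $\varphi\colon M \to N$ and a subset $T \subseteq N$ with $S = \varphi^{-1}(T)$. *)

theory Defs
  imports "HOL-Algebra.Group" "HOL-Library.Countable_Set"
begin

fun padd :: "int list \<Rightarrow> int list \<Rightarrow> int list" where
  "padd [] ys = ys"
| "padd xs [] = xs"
| "padd (x # xs) (y # ys) = (x + y) # padd xs ys"

definition strip :: "int list \<Rightarrow> int list" where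
  "strip xs = rev (dropWhile (\<lambda>x. x = 0) (rev xs))"

definition Zstar :: "int list monoid" where
  "Zstar = \<lparr> carrier = {xs. xs = [] \<or> last xs \<noteq> 0},
             mult = (\<lambda>xs ys. strip (padd xs ys)),
             one = [] \<rparr>"

text \<open>Recognizable subsets of a monoid M. A finite monoid N is represented up to isomorphism
  with carrier a finite set of natural numbers (every finite monoid is isomorphic to such a one).\<close>
definition Rec :: "('a, 'm) monoid_scheme \<Rightarrow> 'a set set" where
  "Rec M = {S. \<exists>(N :: nat monoid) \<phi> T.
              monoid N \<and> finite (carrier N) \<and>
              \<phi> \<in> hom M N \<and> \<phi> \<one>\<^bsub>M\<^esub> = \<one>\<^bsub>N\<^esub> \<and>
              T \<subseteq> carrier N \<and>
              S = {x \<in> carrier M. \<phi> x \<in> T}}"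

end

theory Submission
  imports Defs
begin

text \<open>For every set \<open>A\<close> of positions, the sum of the entries at positions in \<open>A\<close>, taken modulo 2,
  is a monoid morphism from \<open>Z\<^sup>*\<close> onto \<open>\<int>/2\<close>; the preimage of \<open>1\<close> is therefore recognizable.
  The \<open>i\<close>-th unit vector lies in this preimage iff \<open>i \<in> A\<close>, so distinct \<open>A\<close> give distinct
  recognizable sets, and Cantor's theorem finishes the proof.\<close>

fun masked_sum :: "nat set \<Rightarrow> int list \<Rightarrow> int" where
  "masked_sum A [] = 0"
| "masked_sum A (x # xs) = (if 0 \<in> A then x else 0) + masked_sum (Suc -` A) xs"

lemma masked_sum_padd: "masked_sum A (padd xs ys) = masked_sum A xs + masked_sum A ys"
  by (induction xs ys arbitrary: A rule: padd.induct) auto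

lemma masked_sum_append_zero: "masked_sum A (xs @ [0]) = masked_sum A xs"
  by (induction xs arbitrary: A) auto

lemma masked_sum_strip: "masked_sum A (strip xs) = masked_sum A xs"
proof (induction xs rule: rev_induct)
  case Nil
  then show ?case by (simp add: strip_def)
next
  case (snoc y ys)
  then show ?case
    by (cases "y = 0") (simp_all add: strip_def masked_sum_append_zero)
qed

lemma masked_sum_Zstar_mult:
  "masked_sum A (xs \<otimes>\<^bsub>Zstar\<^esub> ys) = masked_sum A xs + masked_sum A ys"
  by (simp add: Zstar_def masked_sum_strip masked_sum_padd)

lemma masked_sum_unit_vector: "masked_sum A (replicate i 0 @ [1]) = (if i \<in> A then 1 else 0)"
  by (induction i arbitrary: A) auto

lemma unit_vector_in_Zstar: "replicate i 0 @ [1] \<in> carrier Zstar"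
  by (simp add: Zstar_def)

definition Z2 :: "nat monoid" where
  "Z2 = \<lparr>carrier = {0, 1}, mult = (\<lambda>a b. (a + b) mod 2), one = 0\<rparr>"

lemma monoid_Z2: "monoid Z2"
  unfolding Z2_def by (rule monoidI) (auto simp: mod_add_left_eq mod_add_right_eq add.assoc)

lemma nat_mod_2_add: "nat ((a + b) mod 2) = (nat (a mod 2) + nat (b mod 2)) mod 2"
  for a b :: int
proof -
  have "nat ((a + b) mod 2) = nat ((a mod 2 + b mod 2) mod 2)"
    by (simp add: mod_add_eq)
  also have "\<dots> = nat (a mod 2 + b mod 2) mod 2"
    by (subst nat_mod_distrib) simp_all
  finally show ?thesis
    by (simp add: nat_add_distrib)
qed

definition masked_parity :: "nat set \<Rightarrow> int list \<Rightarrow> nat" where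
  "masked_parity A xs = nat (masked_sum A xs mod 2)"

lemma masked_parity_hom: "masked_parity A \<in> hom Zstar Z2"
proof (rule homI)
  fix xs
  show "masked_parity A xs \<in> carrier Z2"
    using pos_mod_bound[of 2 "masked_sum A xs"] pos_mod_sign[of 2 "masked_sum A xs"]
    by (auto simp: Z2_def masked_parity_def)
next
  fix xs ys
  show "masked_parity A (xs \<otimes>\<^bsub>Zstar\<^esub> ys) = masked_parity A xs \<otimes>\<^bsub>Z2\<^esub> masked_parity A ys"
    by (simp add: masked_parity_def masked_sum_Zstar_mult Z2_def nat_mod_2_add)
qed

definition odd_masked_sums :: "nat set \<Rightarrow> int list set" where
  "odd_masked_sums A = {xs \<in> carrier Zstar. masked_parity A xs \<in> {1}}"

lemma odd_masked_sums_Rec: "odd_masked_sums A \<in> Rec Zstar"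
  unfolding Rec_def odd_masked_sums_def
  using monoid_Z2 masked_parity_hom
  by (intro CollectI exI[of _ Z2] exI[of _ "masked_parity A"] exI[of _ "{1}"])
    (auto simp: Z2_def Zstar_def masked_parity_def)

lemma unit_vector_in_odd_masked_sums: "replicate i 0 @ [1] \<in> odd_masked_sums A \<longleftrightarrow> i \<in> A"
  using unit_vector_in_Zstar[of i]
  by (simp add: odd_masked_sums_def masked_parity_def masked_sum_unit_vector)

lemma inj_odd_masked_sums: "inj odd_masked_sums"
proof (rule injI)
  fix A B
  assume "odd_masked_sums A = odd_masked_sums B"
  then show "A = B"
    by (metis unit_vector_in_odd_masked_sums subsetI subset_antisym)
qed

lemma uncountable_nat_sets: "uncountable (UNIV :: nat set set)"
proof
  assume "countable (UNIV :: nat set set)"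
  then have "range (from_nat_into UNIV) = Pow (UNIV :: nat set)"
    by (simp add: range_from_nat_into)
  then show False
    using Cantors_theorem by blast
qed

theorem mainTheorem14:
  shows "uncountable (Rec Zstar)"
proof
  assume "countable (Rec Zstar)"
  then have "countable (range odd_masked_sums)"
    using odd_masked_sums_Rec by (meson countable_subset image_subsetI)
  then have "countable (UNIV :: nat set set)"
    using inj_odd_masked_sums countable_image_inj_on by blast
  then show False
    using uncountable_nat_sets by blast
qed

end
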